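(* Let $(M,d)$ be a complete geodesic space with $\mathrm{curv}(M)\le 0$ and finite diameter $\mathrm{diam}(M)>0$. Then for every $p\in M$, the function $x\mapsto d^2(p,x)$ is geodesically $\beta$-expconcave for all $0<\beta\le 1/(2\,\mathrm{diam}(M)^2)$.
   Context: A geodesic is a path $\gamma:[0,1]\to M$ with $d(\gamma(s),\gamma(t))=|t-s|\,d(\gamma(0),\gamma(1))$; a geodesic space is one where any two points are joined by a geodesic. $\mathrm{curv}(M)\le 0$ means: for all $p,x,y\in M$, every geodesic $\gamma:[0,1]\to M$ from $x$ to $y$ and every $t\in[0,1]$, $d^2(p,\gamma(t))\le (1-t)d^2(p,x)+t\,d^2(p,y)-t(1-t)d^2(x,y)$. A function $f:M\to\mathbb R$ is geodesically concave if for every geodesic $\gamma$, $t\mapsto f(\gamma(t))$ is concave on $[0,1]$; for $\beta>0$, $f$ is geodesically $\beta$-expconcave if $\exp(-\beta f)$ is geodesically concave. *)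

theory Defs
  imports "HOL-Analysis.Analysis"
begin

definition geodesic :: "(real \<Rightarrow> 'a::metric_space) \<Rightarrow> bool" where
  "geodesic g \<longleftrightarrow>
     (\<forall>s\<in>{0..1}. \<forall>t\<in>{0..1}. dist (g s) (g t) = \<bar>t - s\<bar> * dist (g 0) (g 1))"

definition geodesic_space :: "'a::metric_space itself \<Rightarrow> bool" where
  "geodesic_space TYPE('a) \<longleftrightarrow>
     (\<forall>x y::'a. \<exists>g. geodesic g \<and> g 0 = x \<and> g 1 = y)"

definition curv_nonpos :: "'a::metric_space itself \<Rightarrow> bool" where
  "curv_nonpos TYPE('a) \<longleftrightarrow>
     (\<forall>p x y::'a. \<forall>g. geodesic g \<and> g 0 = x \<and> g 1 = y \<longrightarrow>
        (\<forall>t\<in>{0..1}. (dist p (g t))\<^sup>2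
           \<le> (1 - t) * (dist p x)\<^sup>2 + t * (dist p y)\<^sup>2 - t * (1 - t) * (dist x y)\<^sup>2))"

definition geod_concave :: "('a::metric_space \<Rightarrow> real) \<Rightarrow> bool" where
  "geod_concave f \<longleftrightarrow> (\<forall>g. geodesic g \<longrightarrow> concave_on {0..1} (\<lambda>t. f (g t)))"

definition geod_expconcave :: "real \<Rightarrow> ('a::metric_space \<Rightarrow> real) \<Rightarrow> bool" where
  "geod_expconcave \<beta> f \<longleftrightarrow> geod_concave (\<lambda>x. exp (- \<beta> * f x))"

end

theory Submission
  imports Defs
begin

text \<open>Nonpositive curvature makes the distance to a point convex along geodesics: the comparison
  inequality bounds the squared distance by the convex combination of the endpoint squares minus
  \<open>t (1 - t) d\<^sup>2(x, y)\<close>, and since \<open>d\<^sup>2(x, y) \<ge> (d(p, x) - d(p, y))\<^sup>2\<close> this is at most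
  \<open>((1 - t) d(p, x) + t d(p, y))\<^sup>2\<close>. The profile \<open>w \<mapsto> exp (- \<beta> w\<^sup>2)\<close> is concave and decreasing
  on \<open>[0, 1 / sqrt (2 \<beta>)]\<close>, an interval containing all distances once \<open>2 \<beta> diam\<^sup>2 \<le> 1\<close>; composing
  it with the convex distance function gives a concave function.\<close>

lemma concave_on_exp_neg_square:
  fixes \<beta> D :: real
  assumes "0 < \<beta>" "2 * \<beta> * D\<^sup>2 \<le> 1"
  shows "concave_on {0..D} (\<lambda>w. exp (- \<beta> * w\<^sup>2))"
proof (rule f''_le0_imp_concave[where f' = "\<lambda>w. - 2 * \<beta> * w * exp (- \<beta> * w\<^sup>2)"
      and f'' = "\<lambda>w. 2 * \<beta> * (2 * \<beta> * w\<^sup>2 - 1) * exp (- \<beta> * w\<^sup>2)"])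
  fix w :: real
  show "DERIV (\<lambda>w. exp (- \<beta> * w\<^sup>2)) w :> - 2 * \<beta> * w * exp (- \<beta> * w\<^sup>2)"
    and "DERIV (\<lambda>w. - 2 * \<beta> * w * exp (- \<beta> * w\<^sup>2)) w
           :> 2 * \<beta> * (2 * \<beta> * w\<^sup>2 - 1) * exp (- \<beta> * w\<^sup>2)"
    by (auto intro!: derivative_eq_intros simp: power2_eq_square algebra_simps)
  assume "w \<in> {0..D}"
  then have "w\<^sup>2 \<le> D\<^sup>2"
    by (auto intro: power_mono)
  with assms have "2 * \<beta> * w\<^sup>2 - 1 \<le> 0"
    by (smt (verit) mult_left_mono)
  with assms(1) show "2 * \<beta> * (2 * \<beta> * w\<^sup>2 - 1) * exp (- \<beta> * w\<^sup>2) \<le> 0"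
    by (simp add: mult_nonneg_nonpos mult_nonpos_nonneg)
qed simp

lemma antimono_on_exp_neg_square:
  fixes \<beta> :: real
  assumes "0 \<le> \<beta>"
  shows "antimono_on {0..} (\<lambda>w. exp (- \<beta> * w\<^sup>2))"
  by (rule monotone_onI) (use assms in \<open>simp add: mult_left_mono power_mono\<close>)

lemma concave_on_compose_convex_antimono:
  fixes f :: "'a::real_vector \<Rightarrow> real"
  assumes h: "concave_on S h"
    and h_anti: "antimono_on S h"
    and f: "convex_on A f" and fA: "f ` A \<subseteq> S"
  shows "concave_on A (\<lambda>x. h (f x))"
  unfolding concave_on_iff
proof (intro conjI ballI allI impI)
  show "convex A"
    using f by (rule convex_on_imp_convex)
  fix x y and u v :: real
  assume xy: "x \<in> A" "y \<in> A" and uv: "0 \<le> u" "0 \<le> v" "u + v = 1"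
  have S: "convex S"
    using h by (rule concave_on_imp_convex)
  have fxy: "f x \<in> S" "f y \<in> S"
    using xy fA by auto
  have "u * h (f x) + v * h (f y) \<le> h (u * f x + v * f y)"
    using h fxy uv unfolding concave_on_iff by simp
  also have "\<dots> \<le> h (f (u *\<^sub>R x + v *\<^sub>R y))"
  proof (rule monotone_onD[OF h_anti])
    show "u * f x + v * f y \<in> S"
      using S fxy uv by (simp add: convex_def)
    show "f (u *\<^sub>R x + v *\<^sub>R y) \<in> S"
      using fA xy uv \<open>convex A\<close> unfolding convex_def by blast
    show "f (u *\<^sub>R x + v *\<^sub>R y) \<le> u * f x + v * f y"
      using f xy uv by (auto simp: convex_on_def)
  qed
  finally show "u * h (f x) + v * h (f y) \<le> h (f (u *\<^sub>R x + v *\<^sub>R y))" .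
qed

lemma geodesic_subpath:
  assumes g: "geodesic g" and a: "a \<in> {0..1}" and b: "b \<in> {0..1}"
  shows "geodesic (\<lambda>s. g ((1 - s) * a + s * b))"
  unfolding geodesic_def
proof (intro ballI)
  fix s t :: real assume s: "s \<in> {0..1}" and t: "t \<in> {0..1}"
  have in_unit: "(1 - r) * a + r * b \<in> {0..1}" if "r \<in> {0..1}" for r
  proof -
    have "(1 - r) * a + r * b \<le> (1 - r) * 1 + r * 1"
      using a b that by (intro add_mono mult_left_mono) auto
    then show ?thesis
      using a b that by auto
  qed
  have diff: "((1 - t) * a + t * b) - ((1 - s) * a + s * b) = (t - s) * (b - a)"
    by (simp add: algebra_simps)
  have "dist (g ((1 - s) * a + s * b)) (g ((1 - t) * a + t * b))
      = \<bar>(t - s) * (b - a)\<bar> * dist (g 0) (g 1)"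
    using g in_unit[OF s] in_unit[OF t] unfolding geodesic_def diff[symmetric] by blast
  also have "\<dots> = \<bar>t - s\<bar> * (\<bar>b - a\<bar> * dist (g 0) (g 1))"
    by (simp add: abs_mult)
  also have "\<bar>b - a\<bar> * dist (g 0) (g 1) = dist (g a) (g b)"
    using g a b unfolding geodesic_def by (metis (no_types))
  finally show "dist (g ((1 - s) * a + s * b)) (g ((1 - t) * a + t * b))
      = \<bar>t - s\<bar> * dist (g ((1 - 0) * a + 0 * b)) (g ((1 - 1) * a + 1 * b))"
    by simp
qed

lemma convex_combination_sq_le:
  fixes t x y \<delta> :: real
  assumes "0 \<le> t" "t \<le> 1" "\<bar>x - y\<bar> \<le> \<delta>"
  shows "(1 - t) * x\<^sup>2 + t * y\<^sup>2 - t * (1 - t) * \<delta>\<^sup>2 \<le> ((1 - t) * x + t * y)\<^sup>2"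
proof -
  have "(x - y)\<^sup>2 \<le> \<delta>\<^sup>2"
    using assms(3) by (metis abs_ge_zero power2_abs power_mono)
  then have "t * (1 - t) * (x - y)\<^sup>2 \<le> t * (1 - t) * \<delta>\<^sup>2"
    using assms(1,2) by (intro mult_left_mono) auto
  moreover have "((1 - t) * x + t * y)\<^sup>2 = (1 - t) * x\<^sup>2 + t * y\<^sup>2 - t * (1 - t) * (x - y)\<^sup>2"
    by (simp add: power2_eq_square algebra_simps)
  ultimately show ?thesis
    by linarith
qed

lemma curv_nonpos_convex_on_dist:
  fixes p :: "'a::metric_space"
  assumes curv: "curv_nonpos TYPE('a)" and g: "geodesic g"
  shows "convex_on {0..1} (\<lambda>t. dist p (g t))"
proof (rule convex_onI)
  fix t a b :: real
  assume t: "0 < t" "t < 1" and a: "a \<in> {0..1}" and b: "b \<in> {0..1}"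
  define x y where "x = dist p (g a)" and "y = dist p (g b)"
  define g' where "g' s = g ((1 - s) * a + s * b)" for s
  have "(dist p (g' t))\<^sup>2
      \<le> (1 - t) * (dist p (g' 0))\<^sup>2 + t * (dist p (g' 1))\<^sup>2 - t * (1 - t) * (dist (g' 0) (g' 1))\<^sup>2"
    using curv geodesic_subpath[OF g a b, folded g'_def] t unfolding curv_nonpos_def by simp
  then have "(dist p (g ((1 - t) * a + t * b)))\<^sup>2
      \<le> (1 - t) * x\<^sup>2 + t * y\<^sup>2 - t * (1 - t) * (dist (g a) (g b))\<^sup>2"
    by (simp add: g'_def x_def y_def)
  also have "\<dots> \<le> ((1 - t) * x + t * y)\<^sup>2"
  proof (rule convex_combination_sq_le)
    show "\<bar>x - y\<bar> \<le> dist (g a) (g b)"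
      using abs_dist_diff_le[of "g a" p "g b"] by (simp add: x_def y_def dist_commute)
  qed (use t in auto)
  finally have "(dist p (g ((1 - t) * a + t * b)))\<^sup>2 \<le> ((1 - t) * x + t * y)\<^sup>2" .
  moreover have "0 \<le> (1 - t) * x + t * y"
    using t by (simp add: x_def y_def)
  ultimately have "dist p (g ((1 - t) * a + t * b)) \<le> (1 - t) * x + t * y"
    by (rule power2_le_imp_le)
  then show "dist p (g ((1 - t) *\<^sub>R a + t *\<^sub>R b)) \<le> (1 - t) * dist p (g a) + t * dist p (g b)"
    by (simp add: x_def y_def)
qed simp

lemma curv_nonpos_geod_expconcave_dist_sq:
  fixes p :: "'a::metric_space"
  assumes curv: "curv_nonpos TYPE('a)"
    and dist_le: "\<And>x y::'a. dist x y \<le> D"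
    and \<beta>: "0 < \<beta>" "2 * \<beta> * D\<^sup>2 \<le> 1"
  shows "geod_expconcave \<beta> (\<lambda>x. (dist p x)\<^sup>2)"
  unfolding geod_expconcave_def geod_concave_def
proof (intro allI impI)
  fix g :: "real \<Rightarrow> 'a" assume "geodesic g"
  show "concave_on {0..1} (\<lambda>t. exp (- \<beta> * (dist p (g t))\<^sup>2))"
  proof (rule concave_on_compose_convex_antimono[where f = "\<lambda>t. dist p (g t)"])
    show "concave_on {0..D} (\<lambda>w. exp (- \<beta> * w\<^sup>2))"
      using \<beta> by (rule concave_on_exp_neg_square)
    show "antimono_on {0..D} (\<lambda>w. exp (- \<beta> * w\<^sup>2))"
      using antimono_on_exp_neg_square[of \<beta>] \<beta>(1) by (auto intro: monotone_on_subset)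
    show "convex_on {0..1} (\<lambda>t. dist p (g t))"
      using curv \<open>geodesic g\<close> by (rule curv_nonpos_convex_on_dist)
    show "(\<lambda>t. dist p (g t)) ` {0..1} \<subseteq> {0..D}"
      using dist_le by auto
  qed
qed

theorem mainTheorem2:
  fixes p :: "'a::complete_space"
  assumes "geodesic_space TYPE('a)"
    and "curv_nonpos TYPE('a)"
    and "bounded (UNIV :: 'a set)"
    and "diameter (UNIV :: 'a set) > 0"
  shows "\<forall>\<beta>. 0 < \<beta> \<and> \<beta> \<le> 1 / (2 * (diameter (UNIV :: 'a set))\<^sup>2) \<longrightarrow>
           geod_expconcave \<beta> (\<lambda>x. (dist p x)\<^sup>2)"
proof (intro allI impI)
  fix \<beta> :: real
  define D where "D = diameter (UNIV :: 'a set)"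
  assume "0 < \<beta> \<and> \<beta> \<le> 1 / (2 * (diameter (UNIV :: 'a set))\<^sup>2)"
  then have \<beta>: "0 < \<beta>" "\<beta> \<le> 1 / (2 * D\<^sup>2)"
    by (simp_all add: D_def)
  have "0 < 2 * D\<^sup>2"
    using assms(4) by (simp add: D_def)
  with \<beta>(2) have "2 * \<beta> * D\<^sup>2 \<le> 1"
    by (simp add: pos_le_divide_eq algebra_simps)
  moreover have "dist x y \<le> D" for x y :: 'a
    unfolding D_def using diameter_bounded_bound[OF assms(3)] by simp
  ultimately show "geod_expconcave \<beta> (\<lambda>x. (dist p x)\<^sup>2)"
    using assms(2) \<beta>(1) by (intro curv_nonpos_geod_expconcave_dist_sq) auto
qed

end
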